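(* Let $m,n\ge 1$, let $a_1,\dots,a_n\in\mathbb{C}$ be distinct, let $m_1,\dots,m_n\ge1$ be integers, and let $c_0,\dots,c_{m-1},b_k^{(j)}\in\mathbb{C}$. Let $$r(\lambda)=\lambda^m-c_{m-1}\lambda^{m-1}-\cdots-c_1\lambda-c_0-\sum_{j=1}^n\sum_{k=1}^{m_j}\frac{b_k^{(j)}}{(\lambda-a_j)^k},$$ and let $\mathcal{C}_r$ be its associated block matrix (defined in the context). Then every zero of $r(\lambda)$ is an eigenvalue of $\mathcal{C}_r$.
   Context: A zero of $r$ is a $\lambda_0\in\mathbb{C}\setminus\{a_1,\dots,a_n\}$ with $r(\lambda_0)=0$. Let $N=m+\sum_{j}\frac{m_j(m_j+1)}2$. The associated block matrix is the $N\times N$ matrix $$\mathcal{C}_r=\begin{bmatrix}\mathcal{A}_n&0&\cdots&0&-\mathcal{F}_n\\ 0&\mathcal{A}_{n-1}&\cdots&0&-\mathcal{F}_{n-1}\\ \vdots&&\ddots&&\vdots\\ 0&0&\cdots&\mathcal{A}_1&-\mathcal{F}_1\\ \mathcal{B}_n&\mathcal{B}_{n-1}&\cdots&\mathcal{B}_1&\mathcal{B}_0\end{bmatrix},$$ where for $1\le j\le n$: $\mathcal{A}_j=\mathrm{diag}(A^{(j)}_{m_j},\dots,A^{(j)}_1)$ with $A^{(j)}_k$ the $k\times k$ upper bidiagonal matrix with $a_j$ on the diagonal and $1$ on the superdiagonal; $\mathcal{F}_j=\begin{bmatrix}F_{m_j}\\ \vdots\\ F_1\end{bmatrix}$ with $F_k$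 the $k\times m$ matrix whose only nonzero entry is $1$ in position $(k,1)$; $\mathcal{B}_j=\begin{bmatrix}B^{(j)}_{m_j}&\cdots&B^{(j)}_1\end{bmatrix}$ with $B^{(j)}_k$ the $m\times k$ matrix whose only nonzero entry is $-b^{(j)}_k$ in position $(m,1)$; and $\mathcal{B}_0$ is the $m\times m$ companion matrix with $1$'s on the superdiagonal, last row $(c_0,c_1,\dots,c_{m-1})$, and zeros elsewhere. *)

theory Defs
  imports "Jordan_Normal_Form.Char_Poly"
begin

definition rfun :: "nat \<Rightarrow> nat \<Rightarrow> (nat \<Rightarrow> complex) \<Rightarrow> (nat \<Rightarrow> nat) \<Rightarrow> (nat \<Rightarrow> complex)
    \<Rightarrow> (nat \<Rightarrow> nat \<Rightarrow> complex) \<Rightarrow> complex \<Rightarrow> complex" where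
  "rfun m n a mm c b z =
     z ^ m - (\<Sum>i<m. c i * z ^ i)
     - (\<Sum>j=1..n. \<Sum>k=1..mm j. b j k / (z - a j) ^ k)"

text \<open>Row/column labels of the block matrix, in order:
  Inl (j,k,i) is row i (1..k) of the sub-block A_k^(j); blocks ordered j = n,...,1 and
  within block j, k = m_j,...,1. Inr p (p = 1..m) are the rows of the last block row.\<close>
definition labels :: "nat \<Rightarrow> nat \<Rightarrow> (nat \<Rightarrow> nat) \<Rightarrow> ((nat \<times> nat \<times> nat) + nat) list" where
  "labels m n mm =
     concat (map (\<lambda>j. concat (map (\<lambda>k. map (\<lambda>i. Inl (j, k, i)) [1..<k+1]) (rev [1..<mm j + 1])))
                 (rev [1..<n+1]))
     @ map Inr [1..<m+1]"

definition entry :: "nat \<Rightarrow> (nat \<Rightarrow> complex) \<Rightarrow> (nat \<Rightarrow> complex) \<Rightarrow> (nat \<Rightarrow> nat \<Rightarrow> complex)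
    \<Rightarrow> ((nat \<times> nat \<times> nat) + nat) \<Rightarrow> ((nat \<times> nat \<times> nat) + nat) \<Rightarrow> complex" where
  "entry m a c b x y = (case (x, y) of
      (Inl (j, k, i), Inl (j', k', i')) \<Rightarrow>
         (if j = j' \<and> k = k' then (if i' = i then a j else if i' = i + 1 then 1 else 0) else 0)
    | (Inl (j, k, i), Inr p) \<Rightarrow> (if i = k \<and> p = 1 then -1 else 0)
    | (Inr p, Inl (j, k, i)) \<Rightarrow> (if p = m \<and> i = 1 then - b j k else 0)
    | (Inr p, Inr q) \<Rightarrow> (if p = m then c (q - 1) else if q = p + 1 then 1 else 0))"

definition block_matrix :: "nat \<Rightarrow> nat \<Rightarrow> (nat \<Rightarrow> complex) \<Rightarrow> (nat \<Rightarrow> nat) \<Rightarrow> (nat \<Rightarrow> complex)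
    \<Rightarrow> (nat \<Rightarrow> nat \<Rightarrow> complex) \<Rightarrow> complex mat" where
  "block_matrix m n a mm c b =
     (let L = labels m n mm
      in mat (length L) (length L) (\<lambda>(r, s). entry m a c b (L ! r) (L ! s)))"

end

theory Submission
  imports Defs
begin

text \<open>The eigenvector is explicit: put \<open>v(j,k,i) = -1/(z - a j)^(k-i+1)\<close> on the rows of the
  Jordan blocks and \<open>v(p) = z^(p-1)\<close> on the last block row. In a Jordan block row,
  \<open>z = a j + (z - a j)\<close> turns \<open>a j * v(j,k,i) + v(j,k,i+1)\<close> into \<open>z * v(j,k,i)\<close>; in the last row
  of a block the role of \<open>v(j,k,k+1)\<close> is played by \<open>-v(1) = -1\<close>, contributed by \<open>-F\<close>. The
  companion rows shift the powers of \<open>z\<close>, and the bottom row sends \<open>v\<close> to \<open>z^m - r(z)\<close>, which is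
  \<open>z * v(m)\<close> exactly when \<open>r(z) = 0\<close>.\<close>

type_synonym label = "(nat \<times> nat \<times> nat) + nat"

definition pole_indices :: "nat \<Rightarrow> (nat \<Rightarrow> nat) \<Rightarrow> (nat \<times> nat \<times> nat) set" where
  "pole_indices n mm = (SIGMA j:{1..n}. SIGMA k:{1..mm j}. {1..k})"

lemma finite_pole_indices [simp]: "finite (pole_indices n mm)"
  unfolding pole_indices_def by auto

lemma set_labels: "set (labels m n mm) = Inl ` pole_indices n mm \<union> Inr ` {1..m}"
  unfolding labels_def pole_indices_def by (auto simp: image_iff)

lemma distinct_concat_map:
  assumes "distinct xs" and "\<And>x. x \<in> set xs \<Longrightarrow> distinct (f x)"
    and "\<And>x y. x \<in> set xs \<Longrightarrow> y \<in> set xs \<Longrightarrow> x \<noteq> y \<Longrightarrow> set (f x) \<inter> set (f y) = {}"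
  shows "distinct (concat (map f xs))"
  using assms by (induction xs) auto

lemma distinct_labels: "distinct (labels m n mm)"
  unfolding labels_def
  by (auto intro!: distinct_concat_map simp: distinct_map inj_on_def)

lemma sum_labels:
  "(\<Sum>y\<in>set (labels m n mm). g y) = (\<Sum>t\<in>pole_indices n mm. g (Inl t)) + (\<Sum>p=1..m. g (Inr p))"
  unfolding set_labels by (subst sum.union_disjoint) (auto simp: sum.reindex)

lemma sum_pole_indices:
  "(\<Sum>(j, k, i)\<in>pole_indices n mm. g j k i) = (\<Sum>j=1..n. \<Sum>k=1..mm j. \<Sum>i=1..k. g j k i)"
  unfolding pole_indices_def by (simp add: sum.Sigma[symmetric])

lemma eigenvalue_mat_of_labels:
  fixes L :: "'a list" and f :: "'a \<Rightarrow> 'a \<Rightarrow> 'b :: comm_ring_1"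
  assumes "distinct L"
    and "\<And>x. x \<in> set L \<Longrightarrow> (\<Sum>y\<in>set L. f x y * v y) = z * v x"
    and "x0 \<in> set L" and "v x0 \<noteq> 0"
  shows "eigenvalue (mat (length L) (length L) (\<lambda>(r, s). f (L ! r) (L ! s))) z"
proof -
  define u where "u = vec (length L) (\<lambda>r. v (L ! r))"
  obtain r0 where "r0 < length L" "L ! r0 = x0"
    using assms(3) by (metis in_set_conv_nth)
  then have "u \<noteq> 0\<^sub>v (length L)"
    using assms(4) by (metis index_vec index_zero_vec(1) u_def)
  moreover have "mat (length L) (length L) (\<lambda>(r, s). f (L ! r) (L ! s)) *\<^sub>v u = z \<cdot>\<^sub>v u"
  proof (rule eq_vecI)
    fix r assume "r < dim_vec (z \<cdot>\<^sub>v u)"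
    then have r: "r < length L" by (simp add: u_def)
    have "(\<Sum>s<length L. f (L ! r) (L ! s) * v (L ! s)) = (\<Sum>y\<leftarrow>L. f (L ! r) y * v y)"
      by (simp add: sum_list_sum_nth atLeast0LessThan)
    also have "\<dots> = z * v (L ! r)"
      using assms(1,2) r by (simp add: sum_list_distinct_conv_sum_set)
    finally show "(mat (length L) (length L) (\<lambda>(r, s). f (L ! r) (L ! s)) *\<^sub>v u) $ r = (z \<cdot>\<^sub>v u) $ r"
      using r by (simp add: u_def mult_mat_vec_def scalar_prod_def atLeast0LessThan)
  qed (simp add: u_def)
  ultimately show ?thesis
    unfolding eigenvalue_def eigenvector_def by (intro exI[of _ u]) (simp add: u_def)
qed

lemma pole_row_action:
  assumes "(j, k, i) \<in> pole_indices n mm" and "m \<ge> 1"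
  shows "(\<Sum>y\<in>set (labels m n mm). entry m a c b (Inl (j, k, i)) y * v y) =
         a j * v (Inl (j, k, i)) + (if i < k then v (Inl (j, k, i + 1)) else - v (Inr 1))"
proof -
  have next_index: "(j, k, i + 1) \<in> pole_indices n mm \<longleftrightarrow> i < k"
    using assms(1) by (auto simp: pole_indices_def)
  have "(\<Sum>t\<in>pole_indices n mm. entry m a c b (Inl (j, k, i)) (Inl t) * v (Inl t)) =
        (\<Sum>t\<in>pole_indices n mm. (if t = (j, k, i) then a j * v (Inl t) else 0)
           + (if t = (j, k, i + 1) then v (Inl t) else 0))"
    by (rule sum.cong) (auto simp: entry_def split: if_splits)
  moreover have "(\<Sum>p=1..m. entry m a c b (Inl (j, k, i)) (Inr p) * v (Inr p)) =
        (\<Sum>p=1..m. if p = 1 then (if i = k then - v (Inr 1) else 0) else 0)"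
    by (rule sum.cong) (auto simp: entry_def)
  moreover have "i \<le> k"
    using assms(1) by (auto simp: pole_indices_def)
  ultimately show ?thesis
    unfolding sum_labels using assms next_index by (simp add: sum.distrib)
qed

lemma companion_row_action:
  assumes "1 \<le> p" and "p < m"
  shows "(\<Sum>y\<in>set (labels m n mm). entry m a c b (Inr p) y * v y) = v (Inr (p + 1))"
proof -
  have "(\<Sum>t\<in>pole_indices n mm. entry m a c b (Inr p) (Inl t) * v (Inl t)) = 0"
    using assms by (intro sum.neutral) (auto simp: entry_def)
  moreover have "(\<Sum>q=1..m. entry m a c b (Inr p) (Inr q) * v (Inr q)) =
                 (\<Sum>q=1..m. if q = p + 1 then v (Inr q) else 0)"
    using assms by (intro sum.cong) (auto simp: entry_def)
  ultimately show ?thesis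
    unfolding sum_labels using assms by simp
qed

lemma last_row_action:
  "(\<Sum>y\<in>set (labels m n mm). entry m a c b (Inr m) y * v y) =
   (\<Sum>i<m. c i * v (Inr (i + 1))) - (\<Sum>j=1..n. \<Sum>k=1..mm j. b j k * v (Inl (j, k, 1)))"
proof -
  have "(\<Sum>t\<in>pole_indices n mm. entry m a c b (Inr m) (Inl t) * v (Inl t)) =
        (\<Sum>(j, k, i)\<in>pole_indices n mm. if i = 1 then - b j k * v (Inl (j, k, 1)) else 0)"
    by (rule sum.cong) (auto simp: entry_def)
  also have "\<dots> = (\<Sum>j=1..n. \<Sum>k=1..mm j. \<Sum>i=1..k. if i = 1 then - b j k * v (Inl (j, k, 1)) else 0)"
    by (rule sum_pole_indices)
  also have "\<dots> = - (\<Sum>j=1..n. \<Sum>k=1..mm j. b j k * v (Inl (j, k, 1)))"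
    by (simp add: sum_negf)
  finally have poles: "(\<Sum>t\<in>pole_indices n mm. entry m a c b (Inr m) (Inl t) * v (Inl t)) =
    - (\<Sum>j=1..n. \<Sum>k=1..mm j. b j k * v (Inl (j, k, 1)))" .
  have "(\<Sum>q=1..m. entry m a c b (Inr m) (Inr q) * v (Inr q)) = (\<Sum>q=1..m. c (q - 1) * v (Inr q))"
    by (intro sum.cong) (auto simp: entry_def)
  also have "\<dots> = (\<Sum>i<m. c i * v (Inr (i + 1)))"
    by (rule sum.reindex_bij_witness[where i = Suc and j = "\<lambda>q. q - 1"]) auto
  finally show ?thesis
    unfolding sum_labels poles by simp
qed

fun root_eigenvector :: "complex \<Rightarrow> (nat \<Rightarrow> complex) \<Rightarrow> label \<Rightarrow> complex" where
  "root_eigenvector z a (Inl (j, k, i)) = - 1 / (z - a j) ^ (k - i + 1)"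
| "root_eigenvector z a (Inr p) = z ^ (p - 1)"

lemma pole_power_shift:
  fixes z w :: "'a :: field"
  assumes "z \<noteq> w"
  shows "w / (z - w) ^ Suc e + 1 / (z - w) ^ e = z / (z - w) ^ Suc e"
  using assms by (simp add: field_simps)

lemma root_eigenvector_pole_row:
  assumes "(j, k, i) \<in> pole_indices n mm" and "m \<ge> 1" and "z \<notin> a ` {1..n}"
  shows "(\<Sum>y\<in>set (labels m n mm). entry m a c b (Inl (j, k, i)) y * root_eigenvector z a y) =
         z * root_eigenvector z a (Inl (j, k, i))"
proof -
  have "j \<in> {1..n}" and "i \<le> k"
    using assms(1) by (auto simp: pole_indices_def)
  then have "z \<noteq> a j"
    using assms(3) by auto
  have "(\<Sum>y\<in>set (labels m n mm). entry m a c b (Inl (j, k, i)) y * root_eigenvector z a y) =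
        a j * root_eigenvector z a (Inl (j, k, i)) +
        (if i < k then root_eigenvector z a (Inl (j, k, i + 1)) else - root_eigenvector z a (Inr 1))"
    by (rule pole_row_action[OF assms(1,2)])
  also have "\<dots> = - (a j / (z - a j) ^ Suc (k - i) + 1 / (z - a j) ^ (k - i))"
    using \<open>i \<le> k\<close> by (auto simp: Suc_diff_Suc)
  also have "\<dots> = z * root_eigenvector z a (Inl (j, k, i))"
    by (simp only: pole_power_shift[OF \<open>z \<noteq> a j\<close>] root_eigenvector.simps) simp
  finally show ?thesis .
qed

lemma root_eigenvector_last_row:
  assumes "m \<ge> 1" and "rfun m n a mm c b z = 0"
  shows "(\<Sum>y\<in>set (labels m n mm). entry m a c b (Inr m) y * root_eigenvector z a y) =
         z * root_eigenvector z a (Inr m)"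
proof -
  have poles: "(\<Sum>j=1..n. \<Sum>k=1..mm j. b j k * root_eigenvector z a (Inl (j, k, 1))) =
               - (\<Sum>j=1..n. \<Sum>k=1..mm j. b j k / (z - a j) ^ k)"
    unfolding sum_negf[symmetric] by (intro sum.cong refl) (auto simp: Suc_pred)
  have "(\<Sum>y\<in>set (labels m n mm). entry m a c b (Inr m) y * root_eigenvector z a y) =
        (\<Sum>i<m. c i * z ^ i) + (\<Sum>j=1..n. \<Sum>k=1..mm j. b j k / (z - a j) ^ k)"
    by (simp add: last_row_action poles sum_negf)
  also have "\<dots> = z ^ m"
    using assms(2) by (simp add: rfun_def algebra_simps)
  also have "\<dots> = z * root_eigenvector z a (Inr m)"
    using assms(1) by (simp add: power_eq_if)
  finally show ?thesis .
qed

lemma root_eigenvector_eigen_equation: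
  assumes "x \<in> set (labels m n mm)" and "m \<ge> 1"
    and "z \<notin> a ` {1..n}" and "rfun m n a mm c b z = 0"
  shows "(\<Sum>y\<in>set (labels m n mm). entry m a c b x y * root_eigenvector z a y) =
         z * root_eigenvector z a x"
proof -
  consider (pole) j k i where "x = Inl (j, k, i)" "(j, k, i) \<in> pole_indices n mm"
    | (companion) p where "x = Inr p" "1 \<le> p" "p < m"
    | (last) "x = Inr m"
    using assms(1) unfolding set_labels by fastforce
  then show ?thesis
  proof cases
    case pole
    then show ?thesis using root_eigenvector_pole_row assms(2,3) by blast
  next
    case companion
    then show ?thesis by (simp add: companion_row_action power_eq_if)
  next
    case last
    then show ?thesis using root_eigenvector_last_row assms(2,4) by blast
  qed
qed

theorem corollary3p2:
  fixes m n :: nat and a :: "nat \<Rightarrow> complex" and mm :: "nat \<Rightarrow> nat"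
    and c :: "nat \<Rightarrow> complex" and b :: "nat \<Rightarrow> nat \<Rightarrow> complex" and z0 :: complex
  assumes "m \<ge> 1" and "n \<ge> 1"
    and "inj_on a {1..n}"
    and "\<And>j. j \<in> {1..n} \<Longrightarrow> mm j \<ge> 1"
    and "z0 \<notin> a ` {1..n}"
    and "rfun m n a mm c b z0 = 0"
  shows "eigenvalue (block_matrix m n a mm c b) z0"
  unfolding block_matrix_def Let_def
proof (rule eigenvalue_mat_of_labels)
  show "distinct (labels m n mm)"
    by (rule distinct_labels)
  show "Inr 1 \<in> set (labels m n mm)"
    using assms(1) by (simp add: set_labels)
  show "root_eigenvector z0 a (Inr 1) \<noteq> 0"
    by simp
  show "(\<Sum>y\<in>set (labels m n mm). entry m a c b x y * root_eigenvector z0 a y) =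
        z0 * root_eigenvector z0 a x" if "x \<in> set (labels m n mm)" for x
    using root_eigenvector_eigen_equation[OF that assms(1,5,6)] .
qed

end
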